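(* Let $h:\mathbb{R}\to\mathbb{R}$ be continuous and let $u_1,u_2$ be linearly independent real solutions of $u''(x)+h(x)u(x)=0$. (i) For any matrix in $GL(2,\mathbb{R})$, the pair of solutions obtained by applying it to $(u_1,u_2)$ is again linearly independent, so the action of $GL(2,\mathbb{R})$ on the span of the solutions induces (via the map of the context) a local isomorphism of the Poincaré upper half plane $\mathbb{H}$. (ii) For real constants $A,B$, not both zero, let $u(x)=Au_1(x)+Bu_2(x)$ and \[ Y(x,\varPhi)=\frac{\varPhi}{\varPhi^2[u(x)]^2+[u'(x)]^2}. \] Then $Y$ (depending on the two parameters $A,B$) is a complete integral of the partial differential equation \[ \left(\frac{\varPhi}{h(x)-\varPhi^{2}}\frac{\partial Y}{\partial x}(x,\varPhi)\right)^{2}+\left(\varPhi\frac{\partial Y}{\partial\varPhi}(x,\varPhi)\right)^{2}=Y^2(x,\varPhi) \] on $\{(x,\varPhi)\mid\varPhi>0,\ \varPhi^2\neq h(x)\}$.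
   Context: For linearly independent solutions $v_1,v_2$ of $u''+hu=0$ with Wronskian $W=v_1'v_2-v_1v_2'$, the map $(x,\varPhi)\mapsto(X,Y)$, $X=X_0\pm W^{-1}\frac{\varPhi^2v_1v_2+v_1'v_2'}{\varPhi^2v_1^2+(v_1')^2}$, $Y=\frac{\varPhi}{\varPhi^2v_1^2+(v_1')^2}$, is a local diffeomorphism pulling back $g_{\mathbb{H}}=(dX^2+dY^2)/Y^2$ on $\{Y>0\}$ to $g_h=\left[(h(x)-\varPhi^2)^2dx^2+d\varPhi^2\right]/\varPhi^2$ on $\{\varPhi>0,\ \varPhi^2\neq h(x)\}$. *)

theory Defs
  imports "HOL-Analysis.Analysis"
begin

definition is_solution :: "(real \<Rightarrow> real) \<Rightarrow> (real \<Rightarrow> real) \<Rightarrow> bool" where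
  "is_solution h u \<longleftrightarrow>
     (\<forall>x. (u has_real_derivative deriv u x) (at x)) \<and>
     (\<forall>x. (deriv u has_real_derivative (- h x * u x)) (at x))"

definition lin_indep2 :: "(real \<Rightarrow> real) \<Rightarrow> (real \<Rightarrow> real) \<Rightarrow> bool" where
  "lin_indep2 v1 v2 \<longleftrightarrow> (\<forall>a b. (\<forall>x. a * v1 x + b * v2 x = 0) \<longrightarrow> a = 0 \<and> b = 0)"

definition wronskian :: "(real \<Rightarrow> real) \<Rightarrow> (real \<Rightarrow> real) \<Rightarrow> real \<Rightarrow> real" where
  "wronskian v1 v2 x = deriv v1 x * v2 x - v1 x * deriv v2 x"

definition Psi :: "(real \<Rightarrow> real) \<Rightarrow> (real \<Rightarrow> real) \<Rightarrow> real \<Rightarrow> real \<Rightarrow> real \<times> real \<Rightarrow> real \<times> real" where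
  "Psi v1 v2 X0 s p = (let x = fst p; \<Phi> = snd p;
      D = \<Phi>\<^sup>2 * (v1 x)\<^sup>2 + (deriv v1 x)\<^sup>2 in
      (X0 + s * (1 / wronskian v1 v2 x) * ((\<Phi>\<^sup>2 * v1 x * v2 x + deriv v1 x * deriv v2 x) / D),
       \<Phi> / D))"

definition upper_half_plane :: "(real \<times> real) set" where
  "upper_half_plane = {p. snd p > 0}"

definition gH :: "real \<times> real \<Rightarrow> real \<times> real \<Rightarrow> real" where
  "gH p v = ((fst v)\<^sup>2 + (snd v)\<^sup>2) / (snd p)\<^sup>2"

definition local_isometry_H :: "(real \<times> real \<Rightarrow> real \<times> real) \<Rightarrow> bool" where
  "local_isometry_H T \<longleftrightarrow>
     T ` upper_half_plane \<subseteq> upper_half_plane \<and>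
     (\<forall>z\<in>upper_half_plane. \<exists>e>0. inj_on T (ball z e)) \<and>
     (\<forall>z\<in>upper_half_plane. \<exists>T'. (T has_derivative T') (at z) \<and>
         (\<forall>v. gH (T z) (T' v) = gH z v))"

section \<open>Complete integral of a first-order PDE F(x,y,z,z_x,z_y) = 0 in two variables,
  with a two-parameter family z = phi a b x y\<close>

definition pd1 :: "(real \<Rightarrow> real \<Rightarrow> real) \<Rightarrow> real \<Rightarrow> real \<Rightarrow> real" where
  "pd1 f s t = deriv (\<lambda>r. f r t) s"

definition pd2 :: "(real \<Rightarrow> real \<Rightarrow> real) \<Rightarrow> real \<Rightarrow> real \<Rightarrow> real" where
  "pd2 f s t = deriv (\<lambda>r. f s r) t"

definition has_partials :: "(real \<Rightarrow> real \<Rightarrow> real) \<Rightarrow> real \<Rightarrow> real \<Rightarrow> bool" where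
  "has_partials f s t \<longleftrightarrow> (\<lambda>r. f r t) differentiable (at s) \<and> (\<lambda>r. f s r) differentiable (at t)"

definition complete_integral ::
  "(real \<Rightarrow> real \<Rightarrow> real \<Rightarrow> real \<Rightarrow> real \<Rightarrow> real) \<Rightarrow> (real \<times> real) set \<Rightarrow> (real \<times> real) set
     \<Rightarrow> (real \<Rightarrow> real \<Rightarrow> real \<Rightarrow> real \<Rightarrow> real) \<Rightarrow> bool" where
  "complete_integral F S P \<phi> \<longleftrightarrow>
     (\<forall>a b x y. (a, b) \<in> P \<and> (x, y) \<in> S \<longrightarrow>
        (let zx = (\<lambda>a b. pd1 (\<phi> a b) x y); zy = (\<lambda>a b. pd2 (\<phi> a b) x y);
             z = (\<lambda>a b. \<phi> a b x y) in
         has_partials (\<phi> a b) x y \<and>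
         F x y (z a b) (zx a b) (zy a b) = 0 \<and>
         has_partials z a b \<and> has_partials zx a b \<and> has_partials zy a b \<and>
         \<comment> \<open>the 2x3 matrix [[z_a, zx_a, zy_a],[z_b, zx_b, zy_b]] has rank 2\<close>
         (pd1 z a b * pd2 zx a b - pd2 z a b * pd1 zx a b \<noteq> 0 \<or>
          pd1 z a b * pd2 zy a b - pd2 z a b * pd1 zy a b \<noteq> 0 \<or>
          pd1 zx a b * pd2 zy a b - pd2 zx a b * pd1 zy a b \<noteq> 0)))"

end

theory Submission
  imports Defs
begin

text \<open>
  Write \<open>Z\<^sub>i = u\<^sub>i' + i \<Phi> u\<^sub>i\<close>. The map of the context sends \<open>(x, \<Phi>)\<close> to the image of the point
  \<open>Z\<^sub>2 / (W Z\<^sub>1)\<close> of the upper half plane under \<open>(X, Y) \<mapsto> (X\<^sub>0 \<plusminus> X, Y)\<close>, where the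
  Wronskian \<open>W\<close> is a nonzero constant.
  Replacing \<open>(u\<^sub>1, u\<^sub>2)\<close> by \<open>(a u\<^sub>1 + b u\<^sub>2, c u\<^sub>1 + d u\<^sub>2)\<close> moves this point by a real
  Moebius transformation of determinant \<open>((ad - bc) W)\<^sup>2 > 0\<close>, a hyperbolic isometry
  independent of \<open>x\<close>; this gives (i).

  For (ii), put \<open>(p, q) = (u x, u' x)\<close> and \<open>D = \<Phi>\<^sup>2 p\<^sup>2 + q\<^sup>2\<close>, so \<open>Y = \<Phi> / D\<close>. Since \<open>u'' = - h u\<close>,
  \<open>Y\<^sub>x = 2 \<Phi> (h - \<Phi>\<^sup>2) p q / D\<^sup>2\<close> and \<open>Y\<^sub>\<Phi> = (q\<^sup>2 - \<Phi>\<^sup>2 p\<^sup>2) / D\<^sup>2\<close>, and the equation reduces to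
  \<open>4 \<Phi>\<^sup>2 p\<^sup>2 q\<^sup>2 + (q\<^sup>2 - \<Phi>\<^sup>2 p\<^sup>2)\<^sup>2 = D\<^sup>2\<close>. As \<open>(p, q)\<close> depends linearly on \<open>(A, B)\<close> through a matrix
  of determinant \<open>-W\<close>, the Jacobian of \<open>(Y, Y\<^sub>x, Y\<^sub>\<Phi>)\<close> in \<open>(A, B)\<close> has rank 2 as soon as the
  gradients in \<open>(p, q)\<close> span the plane, which two of their \<open>2 \<times> 2\<close> minors show.
  That \<open>W\<close> and \<open>D\<close> never vanish comes from uniqueness for the initial value problem.
\<close>

section \<open>Uniqueness and the Wronskian\<close>

lemma is_solutionD:
  assumes "is_solution h u"
  shows "(u has_real_derivative deriv u x) (at x)"
    and "(deriv u has_real_derivative - h x * u x) (at x)"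
  using assms unfolding is_solution_def by blast+

lemma gronwall_zero:
  fixes E E' :: "real \<Rightarrow> real"
  assumes E: "\<And>t. (E has_real_derivative E' t) (at t)"
    and nonneg: "\<And>t. E t \<ge> 0" and start: "E a = 0"
    and bound: "\<And>t. t \<in> {min a b..max a b} \<Longrightarrow> \<bar>E' t\<bar> \<le> K * E t"
  shows "E b = 0"
proof (cases "a \<le> b")
  case True
  define F where "F t = E t * exp (- K * t)" for t
  have "F b \<le> F a"
  proof (rule DERIV_nonpos_imp_nonincreasing[OF True])
    fix t assume t: "a \<le> t" "t \<le> b"
    have "(F has_real_derivative (E' t - K * E t) * exp (- K * t)) (at t)"
      unfolding F_def by (rule derivative_eq_intros E refl)+ (simp add: algebra_simps)
    moreover have "(E' t - K * E t) * exp (- K * t) \<le> 0"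
      using bound[of t] t True by (intro mult_nonpos_nonneg) auto
    ultimately show "\<exists>y. (F has_real_derivative y) (at t) \<and> y \<le> 0" by blast
  qed
  then show ?thesis using start nonneg[of b] by (simp add: F_def mult_le_0_iff)
next
  case False
  define F where "F t = E t * exp (K * t)" for t
  have "F b \<le> F a"
  proof (rule DERIV_nonneg_imp_nondecreasing[of b a F])
    show "b \<le> a" using False by simp
    fix t assume t: "b \<le> t" "t \<le> a"
    have "(F has_real_derivative (E' t + K * E t) * exp (K * t)) (at t)"
      unfolding F_def by (rule derivative_eq_intros E refl)+ (simp add: algebra_simps)
    moreover have "(E' t + K * E t) * exp (K * t) \<ge> 0"
      using bound[of t] t False by (intro mult_nonneg_nonneg) auto
    ultimately show "\<exists>y. (F has_real_derivative y) (at t) \<and> y \<ge> 0" by blast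
  qed
  then show ?thesis using start nonneg[of b] by (simp add: F_def mult_le_0_iff)
qed

text \<open>The energy \<open>u\<^sup>2 + u'\<^sup>2\<close> of a solution has derivative \<open>2 u u' (1 - h)\<close>, which is bounded by a
  multiple of the energy on compact intervals.\<close>

lemma solution_eq_0_if_initially_0:
  assumes hcont: "continuous_on UNIV h" and sol: "is_solution h u"
    and "u x0 = 0" "deriv u x0 = 0"
  shows "u x = 0"
proof -
  define E where "E t = (u t)\<^sup>2 + (deriv u t)\<^sup>2" for t
  have "bounded (h ` {min x0 x..max x0 x})"
    by (intro compact_imp_bounded compact_continuous_image continuous_on_subset[OF hcont]) auto
  then obtain B where B: "\<forall>t \<in> {min x0 x..max x0 x}. \<bar>h t\<bar> \<le> B"
    unfolding bounded_real by auto
  have "(E has_real_derivative 2 * u t * deriv u t * (1 - h t)) (at t)" for t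
    unfolding E_def
    by (rule derivative_eq_intros is_solutionD[OF sol] refl)+ (simp add: algebra_simps)
  moreover have "E t \<ge> 0" for t by (simp add: E_def)
  moreover have "E x0 = 0" using assms by (simp add: E_def)
  moreover have "\<bar>2 * u t * deriv u t * (1 - h t)\<bar> \<le> (1 + B) * E t"
    if "t \<in> {min x0 x..max x0 x}" for t
  proof -
    have "\<bar>2 * u t * deriv u t\<bar> \<le> E t"
      unfolding E_def using sum_squares_bound[of "\<bar>u t\<bar>" "\<bar>deriv u t\<bar>"] by (simp add: abs_mult)
    moreover have "\<bar>1 - h t\<bar> \<le> 1 + B" using B that by force
    ultimately have "\<bar>2 * u t * deriv u t\<bar> * \<bar>1 - h t\<bar> \<le> E t * (1 + B)"
      by (intro mult_mono) auto
    then show ?thesis by (simp add: abs_mult mult.commute)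
  qed
  ultimately have "E x = 0" by (rule gronwall_zero)
  then show ?thesis by (simp add: E_def)
qed

definition jet :: "(real \<Rightarrow> real) \<Rightarrow> real \<Rightarrow> real \<times> real" where
  "jet u x = (u x, deriv u x)"

lemma has_vector_derivative_jet:
  assumes "is_solution h u"
  shows "(jet u has_vector_derivative (deriv u x, - h x * u x)) (at x)"
  unfolding jet_def[abs_def]
  by (intro has_vector_derivative_Pair is_solutionD[OF assms, unfolded has_real_derivative_iff_has_vector_derivative])

lemma has_real_derivative_lin_comb:
  assumes "is_solution h u1" "is_solution h u2"
  shows "((\<lambda>t. a * u1 t + b * u2 t) has_real_derivative a * deriv u1 x + b * deriv u2 x) (at x)"
  by (rule derivative_eq_intros is_solutionD[OF assms(1)] is_solutionD[OF assms(2)] refl)+ simp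

lemma deriv_lin_comb:
  assumes "is_solution h u1" "is_solution h u2"
  shows "deriv (\<lambda>t. a * u1 t + b * u2 t) x = a * deriv u1 x + b * deriv u2 x"
  by (rule DERIV_imp_deriv[OF has_real_derivative_lin_comb[OF assms]])

lemma jet_lin_comb:
  assumes "is_solution h u1" "is_solution h u2"
  shows "jet (\<lambda>t. a * u1 t + b * u2 t) x = a *\<^sub>R jet u1 x + b *\<^sub>R jet u2 x"
  by (simp add: jet_def deriv_lin_comb[OF assms])

lemma is_solution_lin_comb:
  assumes "is_solution h u1" "is_solution h u2"
  shows "is_solution h (\<lambda>t. a * u1 t + b * u2 t)"
  unfolding is_solution_def deriv_lin_comb[OF assms, abs_def]
proof (intro allI conjI)
  fix x
  show "((\<lambda>t. a * u1 t + b * u2 t) has_real_derivative a * deriv u1 x + b * deriv u2 x) (at x)"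
    by (rule has_real_derivative_lin_comb[OF assms])
  show "((\<lambda>t. a * deriv u1 t + b * deriv u2 t) has_real_derivative - h x * (a * u1 x + b * u2 x)) (at x)"
    by (rule derivative_eq_intros is_solutionD[OF assms(1)] is_solutionD[OF assms(2)] refl)+
       (simp add: algebra_simps)
qed

lemma jet_lin_comb_nonzero:
  assumes "continuous_on UNIV h" "is_solution h u1" "is_solution h u2"
    and "lin_indep2 u1 u2" "(a, b) \<noteq> (0, 0)"
  shows "a *\<^sub>R jet u1 x + b *\<^sub>R jet u2 x \<noteq> 0"
proof
  assume "a *\<^sub>R jet u1 x + b *\<^sub>R jet u2 x = 0"
  then have "a * u1 x + b * u2 x = 0" "deriv (\<lambda>t. a * u1 t + b * u2 t) x = 0"
    by (simp_all add: jet_def deriv_lin_comb[OF assms(2,3)] zero_prod_def)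
  then have "\<forall>t. a * u1 t + b * u2 t = 0"
    using solution_eq_0_if_initially_0[OF assms(1) is_solution_lin_comb[OF assms(2,3)]] by blast
  then show False using assms(4,5) unfolding lin_indep2_def by blast
qed

lemma lin_indep2_lin_comb:
  assumes indep: "lin_indep2 u1 u2" and det: "a * d - b * c \<noteq> 0"
  shows "lin_indep2 (\<lambda>x. a * u1 x + b * u2 x) (\<lambda>x. c * u1 x + d * u2 x)"
  unfolding lin_indep2_def
proof (intro allI impI)
  fix \<alpha> \<beta> assume "\<forall>x. \<alpha> * (a * u1 x + b * u2 x) + \<beta> * (c * u1 x + d * u2 x) = 0"
  then have "\<forall>x. (\<alpha> * a + \<beta> * c) * u1 x + (\<alpha> * b + \<beta> * d) * u2 x = 0"
    by (simp add: algebra_simps)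
  then have z: "\<alpha> * a + \<beta> * c = 0" "\<alpha> * b + \<beta> * d = 0"
    using indep unfolding lin_indep2_def by blast+
  have "\<alpha> * (a * d - b * c) = d * (\<alpha> * a + \<beta> * c) - c * (\<alpha> * b + \<beta> * d)"
    "\<beta> * (a * d - b * c) = a * (\<alpha> * b + \<beta> * d) - b * (\<alpha> * a + \<beta> * c)"
    by (simp_all add: algebra_simps)
  then have "\<alpha> * (a * d - b * c) = 0" "\<beta> * (a * d - b * c) = 0" using z by simp_all
  then show "\<alpha> = 0 \<and> \<beta> = 0" using det by simp
qed

definition det2 :: "real \<times> real \<Rightarrow> real \<times> real \<Rightarrow> real" where
  "det2 v w = fst v * snd w - snd v * fst w"

lemma det2_eq_0_imp_dependent:
  assumes "det2 v w = 0"
  obtains a b where "(a, b) \<noteq> (0, 0)" "a *\<^sub>R v + b *\<^sub>R w = 0"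
proof -
  obtain p1 q1 p2 q2 where vw: "v = (p1, q1)" "w = (p2, q2)" by fastforce
  then have det: "p1 * q2 = q1 * p2" using assms by (simp add: det2_def)
  consider "(p2, - p1) \<noteq> (0, 0)" | "(q2, - q1) \<noteq> (0, 0)" | "v = 0" by (auto simp: vw zero_prod_def)
  then show thesis
  proof cases
    case 1
    show thesis by (rule that[OF 1]) (simp add: vw det algebra_simps zero_prod_def)
  next
    case 2
    show thesis by (rule that[OF 2]) (simp add: vw det algebra_simps zero_prod_def)
  next
    case 3
    show thesis by (rule that[of 1 0]) (simp_all add: 3)
  qed
qed

lemma wronskian_eq_det2: "wronskian u1 u2 x = - det2 (jet u1 x) (jet u2 x)"
  by (simp add: wronskian_def det2_def jet_def)

lemma wronskian_const:
  assumes "is_solution h u1" "is_solution h u2"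
  shows "wronskian u1 u2 x = wronskian u1 u2 y"
proof (rule DERIV_isconst_all[of "wronskian u1 u2"], intro allI)
  show "(wronskian u1 u2 has_real_derivative 0) (at t)" for t
    unfolding wronskian_def[abs_def]
    by (rule derivative_eq_intros is_solutionD[OF assms(1)] is_solutionD[OF assms(2)] refl)+
       (simp add: algebra_simps)
qed

lemma wronskian_nonzero:
  assumes "continuous_on UNIV h" "is_solution h u1" "is_solution h u2" "lin_indep2 u1 u2"
  shows "wronskian u1 u2 x \<noteq> 0"
proof
  assume "wronskian u1 u2 x = 0"
  then have "det2 (jet u1 x) (jet u2 x) = 0" by (simp add: wronskian_eq_det2)
  then obtain a b where "(a, b) \<noteq> (0, 0)" "a *\<^sub>R jet u1 x + b *\<^sub>R jet u2 x = 0"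
    by (rule det2_eq_0_imp_dependent)
  with jet_lin_comb_nonzero[OF assms] show False by blast
qed

lemma wronskian_lin_comb:
  assumes "is_solution h u1" "is_solution h u2"
  shows "wronskian (\<lambda>t. a * u1 t + b * u2 t) (\<lambda>t. c * u1 t + d * u2 t) x
           = (a * d - b * c) * wronskian u1 u2 x"
  by (simp add: wronskian_def deriv_lin_comb[OF assms] algebra_simps)

section \<open>Isometries of the upper half plane\<close>

lemma local_isometry_H_comp:
  assumes T1: "local_isometry_H T1" and T2: "local_isometry_H T2"
  shows "local_isometry_H (T2 \<circ> T1)"
  unfolding local_isometry_H_def
proof (intro conjI ballI)
  show "(T2 \<circ> T1) ` upper_half_plane \<subseteq> upper_half_plane"
    using T1 T2 unfolding local_isometry_H_def by (auto simp: image_comp[symmetric])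
next
  fix z assume z: "z \<in> upper_half_plane"
  then have T1z: "T1 z \<in> upper_half_plane" using T1 unfolding local_isometry_H_def by blast
  obtain e1 where e1: "e1 > 0" "inj_on T1 (ball z e1)"
    using T1 z unfolding local_isometry_H_def by blast
  obtain e2 where e2: "e2 > 0" "inj_on T2 (ball (T1 z) e2)"
    using T2 T1z unfolding local_isometry_H_def by blast
  obtain T1' where T1': "(T1 has_derivative T1') (at z)" "\<forall>v. gH (T1 z) (T1' v) = gH z v"
    using T1 z unfolding local_isometry_H_def by blast
  obtain T2' where T2': "(T2 has_derivative T2') (at (T1 z))" "\<forall>v. gH (T2 (T1 z)) (T2' v) = gH (T1 z) v"
    using T2 T1z unfolding local_isometry_H_def by blast
  obtain e3 where "e3 > 0" "\<And>y. dist y z < e3 \<Longrightarrow> dist (T1 y) (T1 z) < e2"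
    using has_derivative_continuous[OF T1'(1)] e2(1) unfolding continuous_at_eps_delta by blast
  then have e3: "e3 > 0" "T1 ` ball z e3 \<subseteq> ball (T1 z) e2"
    by (auto simp: dist_commute)
  have "inj_on (T2 \<circ> T1) (ball z (min e1 e3))"
  proof (rule comp_inj_on)
    show "inj_on T1 (ball z (min e1 e3))" by (rule inj_on_subset[OF e1(2)]) auto
    show "inj_on T2 (T1 ` ball z (min e1 e3))" by (rule inj_on_subset[OF e2(2)]) (use e3(2) in auto)
  qed
  then show "\<exists>e>0. inj_on (T2 \<circ> T1) (ball z e)"
    using e1(1) e3(1) by (intro exI[of _ "min e1 e3"]) simp
  show "\<exists>T'. (T2 \<circ> T1 has_derivative T') (at z) \<and> (\<forall>v. gH ((T2 \<circ> T1) z) (T' v) = gH z v)"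
    using diff_chain_at[OF T1'(1) T2'(1)] T1'(2) T2'(2) by (metis comp_apply)
qed

definition hmove :: "real \<Rightarrow> real \<Rightarrow> real \<times> real \<Rightarrow> real \<times> real" where
  "hmove X0 s p = (X0 + s * fst p, snd p)"

lemma hmove_inverse: "s \<in> {-1, 1} \<Longrightarrow> hmove (- (s * X0)) s (hmove X0 s p) = p"
  by (auto simp: hmove_def algebra_simps)

lemma local_isometry_H_hmove:
  assumes "s \<in> {-1, 1}"
  shows "local_isometry_H (hmove X0 s)"
  unfolding local_isometry_H_def
proof (intro conjI ballI)
  show "hmove X0 s ` upper_half_plane \<subseteq> upper_half_plane"
    by (auto simp: hmove_def upper_half_plane_def)
  have "inj (hmove X0 s)"
    by (metis assms hmove_inverse injI)
  then show "\<exists>e>0. inj_on (hmove X0 s) (ball z e)" for z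
    by (meson inj_on_subset subset_UNIV zero_less_one)
  have "(hmove X0 s has_derivative (\<lambda>v. (s * fst v, snd v))) (at z)" for z
    unfolding hmove_def[abs_def] by (rule derivative_eq_intros refl)+ simp
  moreover have "gH (hmove X0 s z) (s * fst v, snd v) = gH z v" for z v
    using assms by (auto simp: gH_def hmove_def)
  ultimately show "\<exists>T'. (hmove X0 s has_derivative T') (at z) \<and> (\<forall>v. gH (hmove X0 s z) (T' v) = gH z v)"
    for z by blast
qed

definition complex_of_pair :: "real \<times> real \<Rightarrow> complex" where
  "complex_of_pair p = Complex (fst p) (snd p)"

definition pair_of_complex :: "complex \<Rightarrow> real \<times> real" where
  "pair_of_complex z = (Re z, Im z)"

lemma complex_of_pair_of_complex [simp]: "complex_of_pair (pair_of_complex z) = z"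
  by (simp add: complex_of_pair_def pair_of_complex_def)

lemma pair_of_complex_of_pair [simp]: "pair_of_complex (complex_of_pair p) = p"
  by (simp add: complex_of_pair_def pair_of_complex_def)

lemma gH_pair_of_complex: "gH (pair_of_complex w) (pair_of_complex v) = (cmod v / Im w)\<^sup>2"
  by (simp add: gH_def pair_of_complex_def cmod_power2 power_divide)

lemma has_derivative_holomorphic_pair:
  assumes "(f has_field_derivative f') (at (complex_of_pair z))"
  shows "((\<lambda>p. pair_of_complex (f (complex_of_pair p))) has_derivative
           (\<lambda>v. pair_of_complex (f' * complex_of_pair v))) (at z)"
proof -
  have "bounded_linear complex_of_pair"
    by (rule bounded_linear_intro[where K = 1])
       (auto simp: complex_of_pair_def complex_norm norm_Pair scaleR_conv_of_real complex_eq_iff)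
  moreover have "bounded_linear pair_of_complex"
    unfolding pair_of_complex_def[abs_def] by (intro bounded_linear_Pair bounded_linear_Re bounded_linear_Im)
  ultimately show ?thesis
    by (intro bounded_linear.has_derivative[of pair_of_complex]
        has_derivative_compose[OF bounded_linear_imp_has_derivative[of complex_of_pair]]
        has_field_derivative_imp_has_derivative[OF assms])
qed

definition moebius :: "real \<Rightarrow> real \<Rightarrow> real \<Rightarrow> real \<Rightarrow> complex \<Rightarrow> complex" where
  "moebius a b c d z = (of_real a * z + of_real b) / (of_real c * z + of_real d)"

definition moebius_H :: "real \<Rightarrow> real \<Rightarrow> real \<Rightarrow> real \<Rightarrow> real \<times> real \<Rightarrow> real \<times> real" where
  "moebius_H a b c d p = pair_of_complex (moebius a b c d (complex_of_pair p))"

lemma moebius_denom_nonzero: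
  assumes "a * d - b * c \<noteq> 0" "Im z \<noteq> 0"
  shows "of_real c * z + of_real d \<noteq> 0"
  using assms by (auto simp: complex_eq_iff)

lemma Im_moebius:
  "Im (moebius a b c d z) = (a * d - b * c) * Im z / (cmod (of_real c * z + of_real d))\<^sup>2"
  unfolding moebius_def Im_divide' by (simp add: algebra_simps)

lemma moebius_inj:
  assumes "a * d - b * c \<noteq> 0" "Im z \<noteq> 0" "Im w \<noteq> 0" "moebius a b c d z = moebius a b c d w"
  shows "z = w"
proof -
  have "(of_real a * z + of_real b) * (of_real c * w + of_real d)
      = (of_real a * w + of_real b) * (of_real c * z + of_real d)"
    using assms moebius_denom_nonzero[OF assms(1)] by (simp add: moebius_def field_simps)
  then have "of_real (a * d - b * c) * (z - w) = 0" by (simp add: algebra_simps)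
  then show ?thesis using assms(1) by (metis eq_iff_diff_eq_0 mult_eq_0_iff of_real_eq_0_iff)
qed

lemma has_field_derivative_moebius:
  assumes "of_real c * z + of_real d \<noteq> 0"
  shows "(moebius a b c d has_field_derivative
           of_real (a * d - b * c) / (of_real c * z + of_real d)\<^sup>2) (at z)"
  unfolding moebius_def[abs_def]
  by (rule derivative_eq_intros refl assms)+ (simp add: power2_eq_square algebra_simps)

lemma local_isometry_H_moebius_H:
  assumes det: "a * d - b * c > 0"
  shows "local_isometry_H (moebius_H a b c d)"
  unfolding local_isometry_H_def
proof (intro conjI ballI)
  have Im_pos: "Im (complex_of_pair p) > 0" if "p \<in> upper_half_plane" for p
    using that by (simp add: complex_of_pair_def upper_half_plane_def)
  have den: "of_real c * complex_of_pair p + of_real d \<noteq> 0" if "p \<in> upper_half_plane" for p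
    using moebius_denom_nonzero[of a d b c] Im_pos[OF that] det by simp
  show "moebius_H a b c d ` upper_half_plane \<subseteq> upper_half_plane"
    using det Im_pos den
    by (auto simp: moebius_H_def pair_of_complex_def upper_half_plane_def Im_moebius)
  fix z assume z: "z \<in> upper_half_plane"
  have "ball z (snd z) \<subseteq> upper_half_plane"
  proof
    fix y assume "y \<in> ball z (snd z)"
    then have "\<bar>snd z - snd y\<bar> < snd z" using dist_snd_le[of z y] by (simp add: dist_real_def)
    then show "y \<in> upper_half_plane" by (simp add: upper_half_plane_def)
  qed
  moreover have "inj_on (moebius_H a b c d) upper_half_plane"
  proof (rule inj_onI)
    fix p q assume pq: "p \<in> upper_half_plane" "q \<in> upper_half_plane"
      and "moebius_H a b c d p = moebius_H a b c d q"
    then have "moebius a b c d (complex_of_pair p) = moebius a b c d (complex_of_pair q)"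
      by (simp add: moebius_H_def pair_of_complex_def complex_eq_iff)
    then have "complex_of_pair p = complex_of_pair q"
      using moebius_inj det Im_pos[OF pq(1)] Im_pos[OF pq(2)] by force
    then show "p = q" by (simp add: complex_of_pair_def complex_eq_iff prod_eq_iff)
  qed
  ultimately show "\<exists>e>0. inj_on (moebius_H a b c d) (ball z e)"
    using z by (intro exI[of _ "snd z"]) (auto simp: upper_half_plane_def inj_on_subset)
  define w where "w = complex_of_pair z"
  define f' where "f' = of_real (a * d - b * c) / (of_real c * w + of_real d)\<^sup>2"
  have "(moebius_H a b c d has_derivative (\<lambda>v. pair_of_complex (f' * complex_of_pair v))) (at z)"
    unfolding moebius_H_def[abs_def] f'_def w_def
    by (intro has_derivative_holomorphic_pair has_field_derivative_moebius den z)
  moreover have "gH (moebius_H a b c d z) (pair_of_complex (f' * complex_of_pair v)) = gH z v" for v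
  proof -
    have scale: "cmod f' / Im (moebius a b c d w) = 1 / Im w"
      using det den[OF z] Im_pos[OF z]
      by (simp add: f'_def w_def Im_moebius norm_divide norm_power del: of_real_diff of_real_mult)
    have "cmod (f' * complex_of_pair v) / Im (moebius a b c d w)
        = (cmod f' / Im (moebius a b c d w)) * cmod (complex_of_pair v)"
      by (simp add: norm_mult)
    also have "\<dots> = cmod (complex_of_pair v) / Im w"
      using scale by simp
    finally have "cmod (f' * complex_of_pair v) / Im (moebius a b c d w) = cmod (complex_of_pair v) / Im w" .
    then show ?thesis
      using gH_pair_of_complex[of w "complex_of_pair v"]
      by (simp add: moebius_H_def gH_pair_of_complex w_def)
  qed
  ultimately show "\<exists>T'. (moebius_H a b c d has_derivative T') (at z) \<and>
      (\<forall>v. gH (moebius_H a b c d z) (T' v) = gH z v)" by blast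
qed

section \<open>Linear substitutions act on the map by isometries\<close>

definition cjet :: "real \<Rightarrow> (real \<Rightarrow> real) \<Rightarrow> real \<Rightarrow> complex" where
  "cjet \<Phi> u x = Complex (deriv u x) (\<Phi> * u x)"

definition psi :: "(real \<Rightarrow> real) \<Rightarrow> (real \<Rightarrow> real) \<Rightarrow> real \<Rightarrow> real \<Rightarrow> complex" where
  "psi v1 v2 x \<Phi> = cjet \<Phi> v2 x / (of_real (wronskian v1 v2 x) * cjet \<Phi> v1 x)"

lemma cjet_eq_0_iff: "\<Phi> \<noteq> 0 \<Longrightarrow> cjet \<Phi> u x = 0 \<longleftrightarrow> jet u x = 0"
  by (auto simp: cjet_def jet_def complex_eq_iff zero_prod_def)

lemma cjet_lin_comb:
  assumes "is_solution h u1" "is_solution h u2"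
  shows "cjet \<Phi> (\<lambda>t. a * u1 t + b * u2 t) x = of_real a * cjet \<Phi> u1 x + of_real b * cjet \<Phi> u2 x"
  by (simp add: cjet_def deriv_lin_comb[OF assms] complex_eq_iff algebra_simps)

lemma Psi_eq_hmove_psi:
  assumes W: "wronskian v1 v2 x \<noteq> 0"
  shows "Psi v1 v2 X0 s (x, \<Phi>) = hmove X0 s (pair_of_complex (psi v1 v2 x \<Phi>))"
proof -
  define W where "W = wronskian v1 v2 x"
  define D where "D = \<Phi>\<^sup>2 * (v1 x)\<^sup>2 + (deriv v1 x)\<^sup>2"
  define b where "b = of_real W * cjet \<Phi> v1 x"
  have b: "(Re b)\<^sup>2 + (Im b)\<^sup>2 = W\<^sup>2 * D"
    by (simp add: b_def cjet_def D_def power2_eq_square algebra_simps)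
  have "Re (cjet \<Phi> v2 x) * Re b + Im (cjet \<Phi> v2 x) * Im b
      = W * (\<Phi>\<^sup>2 * v1 x * v2 x + deriv v1 x * deriv v2 x)"
    and "Im (cjet \<Phi> v2 x) * Re b - Re (cjet \<Phi> v2 x) * Im b = W\<^sup>2 * \<Phi>"
    by (simp_all add: b_def cjet_def W_def wronskian_def power2_eq_square algebra_simps)
  then have "Re (psi v1 v2 x \<Phi>) = 1 / W * ((\<Phi>\<^sup>2 * v1 x * v2 x + deriv v1 x * deriv v2 x) / D)"
    and "Im (psi v1 v2 x \<Phi>) = \<Phi> / D"
    using W unfolding psi_def Re_divide Im_divide b W_def[symmetric] b_def[symmetric]
    by (simp_all add: power2_eq_square)
  then show ?thesis
    by (simp add: Psi_def Let_def hmove_def pair_of_complex_def W_def D_def)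
qed

lemma moebius_ratio:
  fixes Z1 Z2 :: complex and W a b c d :: real
  assumes "Z1 \<noteq> 0" "W \<noteq> 0" "a * d - b * c \<noteq> 0" "of_real a * Z1 + of_real b * Z2 \<noteq> 0"
  shows "(of_real c * Z1 + of_real d * Z2) / (of_real ((a * d - b * c) * W) * (of_real a * Z1 + of_real b * Z2))
       = moebius (d * W) c ((a * d - b * c) * W\<^sup>2 * b) ((a * d - b * c) * W * a) (Z2 / (of_real W * Z1))"
proof -
  have "of_real (d * W) * (Z2 / (of_real W * Z1)) + of_real c = (of_real c * Z1 + of_real d * Z2) / Z1"
    and "of_real ((a * d - b * c) * W\<^sup>2 * b) * (Z2 / (of_real W * Z1)) + of_real ((a * d - b * c) * W * a)
      = of_real ((a * d - b * c) * W) * (of_real a * Z1 + of_real b * Z2) / Z1"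
    using assms(1,2) by (simp_all add: field_simps power2_eq_square)
  then show ?thesis
    using assms by (simp add: moebius_def)
qed

lemma psi_lin_comb:
  fixes x :: real
  assumes hcont: "continuous_on UNIV h" and sol: "is_solution h u1" "is_solution h u2"
    and indep: "lin_indep2 u1 u2" and "\<Phi> > 0" and det: "a * d - b * c \<noteq> 0"
  defines "W \<equiv> wronskian u1 u2 x"
  shows "psi (\<lambda>t. a * u1 t + b * u2 t) (\<lambda>t. c * u1 t + d * u2 t) x \<Phi>
       = moebius (d * W) c ((a * d - b * c) * W\<^sup>2 * b) ((a * d - b * c) * W * a) (psi u1 u2 x \<Phi>)"
proof -
  have "W \<noteq> 0" unfolding W_def by (rule wronskian_nonzero[OF hcont sol indep])
  have "jet u1 x \<noteq> 0"
    using jet_lin_comb_nonzero[OF hcont sol indep, of 1 0] by simp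
  then have "cjet \<Phi> u1 x \<noteq> 0" using \<open>\<Phi> > 0\<close> by (simp add: cjet_eq_0_iff)
  have "(a, b) \<noteq> (0, 0)" using det by auto
  then have "jet (\<lambda>t. a * u1 t + b * u2 t) x \<noteq> 0"
    using jet_lin_comb_nonzero[OF hcont sol indep] by (simp add: jet_lin_comb[OF sol])
  then have "of_real a * cjet \<Phi> u1 x + of_real b * cjet \<Phi> u2 x \<noteq> 0"
    using \<open>\<Phi> > 0\<close> by (simp add: cjet_eq_0_iff flip: cjet_lin_comb[OF sol])
  then show ?thesis
    unfolding psi_def cjet_lin_comb[OF sol] wronskian_lin_comb[OF sol] W_def[symmetric]
    using moebius_ratio \<open>W \<noteq> 0\<close> \<open>cjet \<Phi> u1 x \<noteq> 0\<close> det by blast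
qed

lemma Psi_lin_comb_local_isometry:
  assumes hcont: "continuous_on UNIV h" and sol: "is_solution h u1" "is_solution h u2"
    and indep: "lin_indep2 u1 u2" and det: "a * d - b * c \<noteq> 0"
    and s: "s \<in> {-1, 1}" and t: "t \<in> {-1, 1}"
  shows "\<exists>T. local_isometry_H T \<and> (\<forall>x \<Phi>. \<Phi> > 0 \<longrightarrow>
           Psi (\<lambda>x. a * u1 x + b * u2 x) (\<lambda>x. c * u1 x + d * u2 x) X0' t (x, \<Phi>)
             = T (Psi u1 u2 X0 s (x, \<Phi>)))"
proof -
  define W where "W = wronskian u1 u2 0"
  have Wx: "wronskian u1 u2 x = W" for x
    unfolding W_def by (rule wronskian_const[OF sol])
  have "W \<noteq> 0" unfolding W_def by (rule wronskian_nonzero[OF hcont sol indep])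
  \<comment> \<open>since the Wronskian is constant, \<open>M\<close> does not depend on \<open>x\<close>\<close>
  define M where "M = moebius_H (d * W) c ((a * d - b * c) * W\<^sup>2 * b) ((a * d - b * c) * W * a)"
  have "(d * W) * ((a * d - b * c) * W * a) - c * ((a * d - b * c) * W\<^sup>2 * b) = ((a * d - b * c) * W)\<^sup>2"
    by (simp add: power2_eq_square algebra_simps)
  then have "local_isometry_H M"
    unfolding M_def using det \<open>W \<noteq> 0\<close> by (intro local_isometry_H_moebius_H) simp
  then have "local_isometry_H (hmove X0' t \<circ> M \<circ> hmove (- (s * X0)) s)"
    by (intro local_isometry_H_comp local_isometry_H_hmove s t)
  moreover have "Psi (\<lambda>x. a * u1 x + b * u2 x) (\<lambda>x. c * u1 x + d * u2 x) X0' t (x, \<Phi>)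
      = (hmove X0' t \<circ> M \<circ> hmove (- (s * X0)) s) (Psi u1 u2 X0 s (x, \<Phi>))" if "\<Phi> > 0" for x \<Phi>
  proof -
    have "wronskian (\<lambda>x. a * u1 x + b * u2 x) (\<lambda>x. c * u1 x + d * u2 x) x \<noteq> 0"
      using det \<open>W \<noteq> 0\<close> by (simp add: wronskian_lin_comb[OF sol] Wx)
    then show ?thesis
      using psi_lin_comb[OF hcont sol indep that det, of x] \<open>W \<noteq> 0\<close>
      by (simp add: Psi_eq_hmove_psi Wx hmove_inverse[OF s] M_def moebius_H_def)
  qed
  ultimately show ?thesis by blast
qed

section \<open>Gradients and Jacobians\<close>

lemma has_real_derivative_GDERIV_compose:
  assumes "GDERIV G (f x) :> g" "(f has_vector_derivative f') (at x)"
  shows "((\<lambda>t. G (f t)) has_real_derivative g \<bullet> f') (at x)"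
proof -
  have "((\<lambda>t. G (f t)) has_derivative (\<lambda>h. (h *\<^sub>R f') \<bullet> g)) (at x)"
    using diff_chain_at[OF assms(2)[unfolded has_vector_derivative_def] assms(1)[unfolded gderiv_def]]
    by (simp add: o_def)
  moreover have "(\<lambda>h. (h *\<^sub>R f') \<bullet> g) = (*) (g \<bullet> f')"
    by (auto simp: inner_commute)
  ultimately show ?thesis by (simp add: has_field_derivative_def)
qed

lemma GDERIV_divide_power:
  fixes N D :: "'a::real_inner \<Rightarrow> real"
  assumes "GDERIV N z :> dN" "GDERIV D z :> dD" "D z \<noteq> 0"
  shows "GDERIV (\<lambda>z. N z / D z ^ m) z :> (1 / D z ^ m) *\<^sub>R dN - (m * N z / D z ^ Suc m) *\<^sub>R dD"
proof (cases m)
  case 0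
  then show ?thesis using assms(1) by simp
next
  case (Suc n)
  from assms(1,2) have dN: "(N has_derivative (\<lambda>h. h \<bullet> dN)) (at z)"
    and dD: "(D has_derivative (\<lambda>h. h \<bullet> dD)) (at z)"
    unfolding gderiv_def .
  show ?thesis
    unfolding Suc gderiv_def
    by (rule has_derivative_eq_rhs[OF has_derivative_divide[OF dN has_derivative_power[OF dD]]])
       (use assms(3) in \<open>auto simp: inner_diff_right inverse_eq_divide\<close>)
qed

lemma GDERIV_pair_polynomial:
  fixes c :: real
  shows "GDERIV (\<lambda>z. c * fst z * snd z) (p, q) :> (c * q, c * p)"
    and "GDERIV (\<lambda>z. c * (fst z)\<^sup>2 + (snd z)\<^sup>2) (p, q) :> (2 * c * p, 2 * q)"
  unfolding gderiv_def
  by (rule has_derivative_eq_rhs, (rule derivative_intros)+, force simp: algebra_simps)+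

lemma partials_linear_subst:
  fixes G :: "'a::real_inner \<Rightarrow> real"
  assumes "GDERIV G (A *\<^sub>R v + B *\<^sub>R w) :> g"
  shows "has_partials (\<lambda>a b. G (a *\<^sub>R v + b *\<^sub>R w)) A B"
    and "pd1 (\<lambda>a b. G (a *\<^sub>R v + b *\<^sub>R w)) A B = g \<bullet> v"
    and "pd2 (\<lambda>a b. G (a *\<^sub>R v + b *\<^sub>R w)) A B = g \<bullet> w"
proof -
  have "((\<lambda>a. a *\<^sub>R v + B *\<^sub>R w) has_vector_derivative v) (at A)"
    and "((\<lambda>b. A *\<^sub>R v + b *\<^sub>R w) has_vector_derivative w) (at B)"
    by (auto intro!: derivative_eq_intros)
  then have dA: "((\<lambda>a. G (a *\<^sub>R v + B *\<^sub>R w)) has_real_derivative g \<bullet> v) (at A)"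
    and dB: "((\<lambda>b. G (A *\<^sub>R v + b *\<^sub>R w)) has_real_derivative g \<bullet> w) (at B)"
    using assms by (auto intro: has_real_derivative_GDERIV_compose[where G = G])
  show "has_partials (\<lambda>a b. G (a *\<^sub>R v + b *\<^sub>R w)) A B"
    unfolding has_partials_def using dA dB real_differentiable_def by blast
  show "pd1 (\<lambda>a b. G (a *\<^sub>R v + b *\<^sub>R w)) A B = g \<bullet> v"
    unfolding pd1_def by (rule DERIV_imp_deriv[OF dA])
  show "pd2 (\<lambda>a b. G (a *\<^sub>R v + b *\<^sub>R w)) A B = g \<bullet> w"
    unfolding pd2_def by (rule DERIV_imp_deriv[OF dB])
qed

lemma inner_minor_eq_det2:
  fixes g g' v w :: "real \<times> real"
  shows "(g \<bullet> v) * (g' \<bullet> w) - (g \<bullet> w) * (g' \<bullet> v) = det2 g g' * det2 v w"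
  by (cases g, cases g', cases v, cases w) (simp add: det2_def algebra_simps)

definition jacobian_rank2 ::
  "(real \<Rightarrow> real \<Rightarrow> real) \<Rightarrow> (real \<Rightarrow> real \<Rightarrow> real) \<Rightarrow> (real \<Rightarrow> real \<Rightarrow> real) \<Rightarrow> real \<Rightarrow> real \<Rightarrow> bool"
  where "jacobian_rank2 f g k a b \<longleftrightarrow>
    has_partials f a b \<and> has_partials g a b \<and> has_partials k a b \<and>
    (pd1 f a b * pd2 g a b - pd2 f a b * pd1 g a b \<noteq> 0 \<or>
     pd1 f a b * pd2 k a b - pd2 f a b * pd1 k a b \<noteq> 0 \<or>
     pd1 g a b * pd2 k a b - pd2 g a b * pd1 k a b \<noteq> 0)"

lemma jacobian_rank2_linear_subst:
  fixes v w :: "real \<times> real"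
  assumes "GDERIV f (A *\<^sub>R v + B *\<^sub>R w) :> df" "GDERIV g (A *\<^sub>R v + B *\<^sub>R w) :> dg"
    and "GDERIV k (A *\<^sub>R v + B *\<^sub>R w) :> dk"
    and "det2 v w \<noteq> 0" "det2 df dg \<noteq> 0 \<or> det2 df dk \<noteq> 0"
  shows "jacobian_rank2 (\<lambda>a b. f (a *\<^sub>R v + b *\<^sub>R w)) (\<lambda>a b. g (a *\<^sub>R v + b *\<^sub>R w))
           (\<lambda>a b. k (a *\<^sub>R v + b *\<^sub>R w)) A B"
  using partials_linear_subst[OF assms(1)] partials_linear_subst[OF assms(2)]
    partials_linear_subst[OF assms(3)] assms(4,5)
  by (auto simp: jacobian_rank2_def inner_minor_eq_det2)

lemma complete_integralI:
  assumes "\<And>a b x y. (a, b) \<in> P \<Longrightarrow> (x, y) \<in> S \<Longrightarrow> has_partials (\<phi> a b) x y"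
    and "\<And>a b x y. (a, b) \<in> P \<Longrightarrow> (x, y) \<in> S \<Longrightarrow>
      F x y (\<phi> a b x y) (pd1 (\<phi> a b) x y) (pd2 (\<phi> a b) x y) = 0"
    and "\<And>a b x y. (a, b) \<in> P \<Longrightarrow> (x, y) \<in> S \<Longrightarrow>
      jacobian_rank2 (\<lambda>a b. \<phi> a b x y) (\<lambda>a b. pd1 (\<phi> a b) x y) (\<lambda>a b. pd2 (\<phi> a b) x y) a b"
  shows "complete_integral F S P \<phi>"
  using assms unfolding complete_integral_def jacobian_rank2_def Let_def by blast

section \<open>The complete integral\<close>

text \<open>At \<open>(p, q) = jet u x\<close> for a solution \<open>u\<close>, these are \<open>Y\<close>, its derivative in \<open>x\<close>
  (with \<open>k = h x - \<Phi>\<^sup>2\<close>) and its derivative in \<open>\<Phi>\<close>.\<close>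

definition Y_den :: "real \<Rightarrow> real \<times> real \<Rightarrow> real" where
  "Y_den \<Phi> = (\<lambda>(p, q). \<Phi>\<^sup>2 * p\<^sup>2 + q\<^sup>2)"

definition Y_val :: "real \<Rightarrow> real \<times> real \<Rightarrow> real" where
  "Y_val \<Phi> z = \<Phi> / Y_den \<Phi> z"

definition Y_x :: "real \<Rightarrow> real \<Rightarrow> real \<times> real \<Rightarrow> real" where
  "Y_x k \<Phi> = (\<lambda>(p, q). 2 * \<Phi> * k * p * q / (Y_den \<Phi> (p, q))\<^sup>2)"

definition Y_Phi :: "real \<Rightarrow> real \<times> real \<Rightarrow> real" where
  "Y_Phi \<Phi> = (\<lambda>(p, q). (q\<^sup>2 - \<Phi>\<^sup>2 * p\<^sup>2) / (Y_den \<Phi> (p, q))\<^sup>2)"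

definition grad_Y_val :: "real \<Rightarrow> real \<times> real \<Rightarrow> real \<times> real" where
  "grad_Y_val \<Phi> = (\<lambda>(p, q). let D = Y_den \<Phi> (p, q) in
     (- 2 * \<Phi> ^ 3 * p / D\<^sup>2, - 2 * \<Phi> * q / D\<^sup>2))"

definition grad_Y_x :: "real \<Rightarrow> real \<Rightarrow> real \<times> real \<Rightarrow> real \<times> real" where
  "grad_Y_x k \<Phi> = (\<lambda>(p, q). let D = Y_den \<Phi> (p, q) in
     (2 * \<Phi> * k * q * (D - 4 * \<Phi>\<^sup>2 * p\<^sup>2) / D ^ 3, 2 * \<Phi> * k * p * (D - 4 * q\<^sup>2) / D ^ 3))"

definition grad_Y_Phi :: "real \<Rightarrow> real \<times> real \<Rightarrow> real \<times> real" where
  "grad_Y_Phi \<Phi> = (\<lambda>(p, q). let D = Y_den \<Phi> (p, q) in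
     (- 2 * \<Phi>\<^sup>2 * p * (3 * q\<^sup>2 - \<Phi>\<^sup>2 * p\<^sup>2) / D ^ 3, 2 * q * (3 * \<Phi>\<^sup>2 * p\<^sup>2 - q\<^sup>2) / D ^ 3))"

lemma Y_den_pos: "\<Phi> \<noteq> 0 \<Longrightarrow> z \<noteq> 0 \<Longrightarrow> Y_den \<Phi> z > 0"
  by (cases z) (auto simp: Y_den_def zero_prod_def add_pos_nonneg add_nonneg_pos)

lemma GDERIV_Y_den: "GDERIV (Y_den \<Phi>) (p, q) :> (2 * \<Phi>\<^sup>2 * p, 2 * q)"
proof -
  have "Y_den \<Phi> = (\<lambda>z. \<Phi>\<^sup>2 * (fst z)\<^sup>2 + (snd z)\<^sup>2)" by (simp add: Y_den_def fun_eq_iff)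
  then show ?thesis using GDERIV_pair_polynomial(2)[of "\<Phi>\<^sup>2"] by simp
qed

lemma GDERIV_Y_val:
  assumes "Y_den \<Phi> (p, q) \<noteq> 0"
  shows "GDERIV (Y_val \<Phi>) (p, q) :> grad_Y_val \<Phi> (p, q)"
proof (rule GDERIV_subst)
  have "Y_val \<Phi> = (\<lambda>z. \<Phi> / Y_den \<Phi> z ^ 1)" by (simp add: Y_val_def fun_eq_iff)
  then show "GDERIV (Y_val \<Phi>) (p, q) :> (1 / Y_den \<Phi> (p, q) ^ 1) *\<^sub>R 0
      - (1 * \<Phi> / Y_den \<Phi> (p, q) ^ 2) *\<^sub>R (2 * \<Phi>\<^sup>2 * p, 2 * q)"
    using GDERIV_divide_power[where m = 1, OF GDERIV_const[of \<Phi>] GDERIV_Y_den assms] by (simp add: power2_eq_square)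
  show "\<dots> = grad_Y_val \<Phi> (p, q)"
    by (simp add: grad_Y_val_def Let_def power3_eq_cube power2_eq_square)
qed

lemma GDERIV_Y_x:
  assumes "Y_den \<Phi> (p, q) \<noteq> 0"
  shows "GDERIV (Y_x k \<Phi>) (p, q) :> grad_Y_x k \<Phi> (p, q)"
proof (rule GDERIV_subst)
  have "Y_x k \<Phi> = (\<lambda>z. 2 * \<Phi> * k * fst z * snd z / Y_den \<Phi> z ^ 2)"
    by (simp add: Y_x_def fun_eq_iff)
  then show "GDERIV (Y_x k \<Phi>) (p, q) :> (1 / Y_den \<Phi> (p, q) ^ 2) *\<^sub>R (2 * \<Phi> * k * q, 2 * \<Phi> * k * p)
      - (2 * (2 * \<Phi> * k * p * q) / Y_den \<Phi> (p, q) ^ 3) *\<^sub>R (2 * \<Phi>\<^sup>2 * p, 2 * q)"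
    using GDERIV_divide_power[where m = 2, OF GDERIV_pair_polynomial(1)[of "2 * \<Phi> * k"] GDERIV_Y_den assms] by simp
  show "\<dots> = grad_Y_x k \<Phi> (p, q)"
    using assms by (simp add: grad_Y_x_def Let_def prod_eq_iff divide_simps) algebra
qed

lemma GDERIV_Y_Phi:
  assumes "Y_den \<Phi> (p, q) \<noteq> 0"
  shows "GDERIV (Y_Phi \<Phi>) (p, q) :> grad_Y_Phi \<Phi> (p, q)"
proof (rule GDERIV_subst)
  have "Y_Phi \<Phi> = (\<lambda>z. (- \<Phi>\<^sup>2 * (fst z)\<^sup>2 + (snd z)\<^sup>2) / Y_den \<Phi> z ^ 2)"
    by (simp add: Y_Phi_def fun_eq_iff)
  then show "GDERIV (Y_Phi \<Phi>) (p, q) :> (1 / Y_den \<Phi> (p, q) ^ 2) *\<^sub>R (2 * - \<Phi>\<^sup>2 * p, 2 * q)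
      - (2 * (- \<Phi>\<^sup>2 * p\<^sup>2 + q\<^sup>2) / Y_den \<Phi> (p, q) ^ 3) *\<^sub>R (2 * \<Phi>\<^sup>2 * p, 2 * q)"
    using GDERIV_divide_power[where m = 2, OF GDERIV_pair_polynomial(2)[of "- \<Phi>\<^sup>2"] GDERIV_Y_den assms] by simp
  show "\<dots> = grad_Y_Phi \<Phi> (p, q)"
    using assms by (simp add: grad_Y_Phi_def Let_def prod_eq_iff divide_simps) (simp add: Y_den_def, algebra)
qed

lemma has_real_derivative_Y_val_Phi:
  assumes "\<Phi> \<noteq> 0"
  shows "((\<lambda>r. Y_val r z) has_real_derivative Y_Phi \<Phi> z) (at \<Phi>)"
proof (cases "z = 0")
  case True
  \<comment> \<open>both sides vanish because \<open>x / 0 = 0\<close>\<close>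
  then show ?thesis by (simp add: Y_val_def Y_Phi_def Y_den_def zero_prod_def)
next
  case False
  obtain p q where z: "z = (p, q)" by fastforce
  have "Y_den \<Phi> z \<noteq> 0" using Y_den_pos[OF assms False] by simp
  then show ?thesis
    unfolding z Y_val_def[abs_def] Y_Phi_def Y_den_def
    by (auto intro!: derivative_eq_intros simp: field_simps power2_eq_square)
qed

lemma grad_Y_val_along_solution: "grad_Y_val \<Phi> (p, q) \<bullet> (q, - H * p) = Y_x (H - \<Phi>\<^sup>2) \<Phi> (p, q)"
  by (simp add: grad_Y_val_def Y_x_def Let_def diff_divide_distrib add_divide_distrib algebra_simps
      power2_eq_square power3_eq_cube)

lemma has_real_derivative_Y_val_jet:
  assumes hcont: "continuous_on UNIV h" and sol: "is_solution h u" and "\<Phi> \<noteq> 0"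
  shows "((\<lambda>t. Y_val \<Phi> (jet u t)) has_real_derivative Y_x (h x - \<Phi>\<^sup>2) \<Phi> (jet u x)) (at x)"
proof (cases "jet u x = 0")
  case True
  then have "u = (\<lambda>_. 0)"
    using solution_eq_0_if_initially_0[OF hcont sol] by (auto simp: jet_def zero_prod_def)
  then show ?thesis by (simp add: jet_def Y_val_def Y_den_def Y_x_def)
next
  case False
  obtain p q where pq: "jet u x = (p, q)" by fastforce
  have "GDERIV (Y_val \<Phi>) (jet u x) :> grad_Y_val \<Phi> (p, q)"
    using pq GDERIV_Y_val Y_den_pos[OF \<open>\<Phi> \<noteq> 0\<close> False] by force
  from has_real_derivative_GDERIV_compose[OF this has_vector_derivative_jet[OF sol]]
  show ?thesis
    using pq grad_Y_val_along_solution[of \<Phi> p q "h x"] by (simp add: jet_def)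
qed

lemma Y_pde:
  assumes "k \<noteq> 0"
  shows "(\<Phi> / k * Y_x k \<Phi> z)\<^sup>2 + (\<Phi> * Y_Phi \<Phi> z)\<^sup>2 = (Y_val \<Phi> z)\<^sup>2"
proof -
  obtain p q where z: "z = (p, q)" by fastforce
  show ?thesis
  proof (cases "Y_den \<Phi> z = 0")
    case True
    then show ?thesis by (simp add: z Y_x_def Y_Phi_def Y_val_def)
  next
    case False
    then show ?thesis
      using assms by (simp add: z Y_x_def Y_Phi_def Y_val_def divide_simps) (simp add: Y_den_def, algebra)
  qed
qed

lemma Y_gradients_independent:
  assumes "\<Phi> \<noteq> 0" "k \<noteq> 0" "z \<noteq> 0"
  shows "det2 (grad_Y_val \<Phi> z) (grad_Y_x k \<Phi> z) \<noteq> 0 \<or> det2 (grad_Y_val \<Phi> z) (grad_Y_Phi \<Phi> z) \<noteq> 0"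
proof -
  obtain p q where z: "z = (p, q)" by fastforce
  define D where "D = Y_den \<Phi> z"
  have "D > 0" unfolding D_def using Y_den_pos assms by blast
  have "det2 (grad_Y_val \<Phi> z) (grad_Y_x k \<Phi> z) = 4 * \<Phi>\<^sup>2 * k * (q\<^sup>2 - \<Phi>\<^sup>2 * p\<^sup>2) / D ^ 4"
    using \<open>D > 0\<close> unfolding D_def
    by (simp add: z det2_def grad_Y_val_def grad_Y_x_def Let_def divide_simps) algebra
  moreover have "det2 (grad_Y_val \<Phi> z) (grad_Y_Phi \<Phi> z) = - 8 * \<Phi> ^ 3 * p * q / D ^ 4"
    using \<open>D > 0\<close> unfolding D_def
    by (simp add: z det2_def grad_Y_val_def grad_Y_Phi_def Let_def divide_simps) (simp add: Y_den_def, algebra)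
  moreover have "q\<^sup>2 \<noteq> \<Phi>\<^sup>2 * p\<^sup>2 \<or> p * q \<noteq> 0"
    using assms by (auto simp: z zero_prod_def)
  ultimately show ?thesis using assms \<open>D > 0\<close> by auto
qed

lemma jacobian_rank2_Y:
  assumes hcont: "continuous_on UNIV h" and sol: "is_solution h u1" "is_solution h u2"
    and indep: "lin_indep2 u1 u2" and AB: "(A, B) \<noteq> (0, 0)" and "\<Phi> > 0" and k: "h x - \<Phi>\<^sup>2 \<noteq> 0"
  shows "jacobian_rank2 (\<lambda>a b. Y_val \<Phi> (a *\<^sub>R jet u1 x + b *\<^sub>R jet u2 x))
           (\<lambda>a b. Y_x (h x - \<Phi>\<^sup>2) \<Phi> (a *\<^sub>R jet u1 x + b *\<^sub>R jet u2 x))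
           (\<lambda>a b. Y_Phi \<Phi> (a *\<^sub>R jet u1 x + b *\<^sub>R jet u2 x)) A B"
proof -
  obtain p q where pq: "A *\<^sub>R jet u1 x + B *\<^sub>R jet u2 x = (p, q)" by fastforce
  have "(p, q) \<noteq> 0" using jet_lin_comb_nonzero[OF hcont sol indep AB, of x] pq by simp
  then have den: "Y_den \<Phi> (p, q) \<noteq> 0" using Y_den_pos[of \<Phi> "(p, q)"] \<open>\<Phi> > 0\<close> by simp
  have "GDERIV (Y_val \<Phi>) (A *\<^sub>R jet u1 x + B *\<^sub>R jet u2 x) :> grad_Y_val \<Phi> (p, q)"
    and "GDERIV (Y_x (h x - \<Phi>\<^sup>2) \<Phi>) (A *\<^sub>R jet u1 x + B *\<^sub>R jet u2 x) :> grad_Y_x (h x - \<Phi>\<^sup>2) \<Phi> (p, q)"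
    and "GDERIV (Y_Phi \<Phi>) (A *\<^sub>R jet u1 x + B *\<^sub>R jet u2 x) :> grad_Y_Phi \<Phi> (p, q)"
    unfolding pq using den by (rule GDERIV_Y_val GDERIV_Y_x GDERIV_Y_Phi)+
  moreover have "det2 (jet u1 x) (jet u2 x) \<noteq> 0"
    using wronskian_nonzero[OF hcont sol indep] by (simp add: wronskian_eq_det2)
  moreover have "det2 (grad_Y_val \<Phi> (p, q)) (grad_Y_x (h x - \<Phi>\<^sup>2) \<Phi> (p, q)) \<noteq> 0
      \<or> det2 (grad_Y_val \<Phi> (p, q)) (grad_Y_Phi \<Phi> (p, q)) \<noteq> 0"
    using Y_gradients_independent[of \<Phi> "h x - \<Phi>\<^sup>2" "(p, q)"] \<open>\<Phi> > 0\<close> k \<open>(p, q) \<noteq> 0\<close> by simp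
  ultimately show ?thesis by (rule jacobian_rank2_linear_subst)
qed

lemma complete_integral_Y:
  assumes hcont: "continuous_on UNIV h" and sol: "is_solution h u1" "is_solution h u2"
    and indep: "lin_indep2 u1 u2"
  shows "complete_integral
       (\<lambda>x \<Phi> Y p q. (\<Phi> / (h x - \<Phi>\<^sup>2) * p)\<^sup>2 + (\<Phi> * q)\<^sup>2 - Y\<^sup>2)
       {(x, \<Phi>). \<Phi> > 0 \<and> \<Phi>\<^sup>2 \<noteq> h x}
       {(A, B). (A, B) \<noteq> (0, 0)}
       (\<lambda>A B x \<Phi>. \<Phi> / (\<Phi>\<^sup>2 * (A * u1 x + B * u2 x)\<^sup>2
                      + (deriv (\<lambda>t. A * u1 t + B * u2 t) x)\<^sup>2))"
    (is "complete_integral _ _ _ ?\<phi>")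
proof -
  have \<phi>_eq: "?\<phi> a b x \<Phi> = Y_val \<Phi> (a *\<^sub>R jet u1 x + b *\<^sub>R jet u2 x)" for a b x \<Phi>
    by (simp add: Y_val_def Y_den_def jet_def deriv_lin_comb[OF sol])
  have dx: "((\<lambda>y. ?\<phi> a b y \<Phi>) has_real_derivative
      Y_x (h x - \<Phi>\<^sup>2) \<Phi> (a *\<^sub>R jet u1 x + b *\<^sub>R jet u2 x)) (at x)" if "\<Phi> > 0" for a b x \<Phi>
    using has_real_derivative_Y_val_jet[OF hcont is_solution_lin_comb[OF sol], of \<Phi> a b x] that
    by (simp add: \<phi>_eq jet_lin_comb[OF sol])
  have d\<Phi>: "((\<lambda>r. ?\<phi> a b x r) has_real_derivative
      Y_Phi \<Phi> (a *\<^sub>R jet u1 x + b *\<^sub>R jet u2 x)) (at \<Phi>)" if "\<Phi> > 0" for a b x \<Phi>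
    using has_real_derivative_Y_val_Phi that by (simp add: \<phi>_eq)
  show ?thesis
  proof (rule complete_integralI)
    fix A B x \<Phi> :: real assume "(A, B) \<in> {(A, B). (A, B) \<noteq> (0, 0)}" "(x, \<Phi>) \<in> {(x, \<Phi>). \<Phi> > 0 \<and> \<Phi>\<^sup>2 \<noteq> h x}"
    then have AB: "(A, B) \<noteq> (0, 0)" and "\<Phi> > 0" and k: "h x - \<Phi>\<^sup>2 \<noteq> 0" by auto
    have pd1_eq: "pd1 (?\<phi> a b) x \<Phi> = Y_x (h x - \<Phi>\<^sup>2) \<Phi> (a *\<^sub>R jet u1 x + b *\<^sub>R jet u2 x)" for a b
      unfolding pd1_def using DERIV_imp_deriv dx \<open>\<Phi> > 0\<close> by blast
    have pd2_eq: "pd2 (?\<phi> a b) x \<Phi> = Y_Phi \<Phi> (a *\<^sub>R jet u1 x + b *\<^sub>R jet u2 x)" for a b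
      unfolding pd2_def using DERIV_imp_deriv d\<Phi> \<open>\<Phi> > 0\<close> by blast
    show "has_partials (?\<phi> A B) x \<Phi>"
      unfolding has_partials_def using dx d\<Phi> \<open>\<Phi> > 0\<close> real_differentiable_def by blast
    show "(\<Phi> / (h x - \<Phi>\<^sup>2) * pd1 (?\<phi> A B) x \<Phi>)\<^sup>2 + (\<Phi> * pd2 (?\<phi> A B) x \<Phi>)\<^sup>2 - (?\<phi> A B x \<Phi>)\<^sup>2 = 0"
      unfolding pd1_eq pd2_eq unfolding \<phi>_eq using Y_pde[OF k] by simp
    have "jacobian_rank2 (\<lambda>a b. Y_val \<Phi> (a *\<^sub>R jet u1 x + b *\<^sub>R jet u2 x))
        (\<lambda>a b. Y_x (h x - \<Phi>\<^sup>2) \<Phi> (a *\<^sub>R jet u1 x + b *\<^sub>R jet u2 x))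
        (\<lambda>a b. Y_Phi \<Phi> (a *\<^sub>R jet u1 x + b *\<^sub>R jet u2 x)) A B"
      by (rule jacobian_rank2_Y[OF hcont sol indep AB \<open>\<Phi> > 0\<close> k])
    then show "jacobian_rank2 (\<lambda>a b. ?\<phi> a b x \<Phi>) (\<lambda>a b. pd1 (?\<phi> a b) x \<Phi>) (\<lambda>a b. pd2 (?\<phi> a b) x \<Phi>) A B"
      unfolding pd1_eq pd2_eq unfolding \<phi>_eq .
  qed
qed

theorem corollary2p15:
  fixes h u1 u2 :: "real \<Rightarrow> real"
  assumes hcont: "continuous_on UNIV h"
    and sol1: "is_solution h u1" and sol2: "is_solution h u2"
    and indep: "lin_indep2 u1 u2"
  shows
    "(\<forall>a b c d :: real. a * d - b * c \<noteq> 0 \<longrightarrow>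
       (let w1 = (\<lambda>x. a * u1 x + b * u2 x); w2 = (\<lambda>x. c * u1 x + d * u2 x) in
        is_solution h w1 \<and> is_solution h w2 \<and> lin_indep2 w1 w2 \<and>
        (\<forall>X0 s X0' s'. s \<in> {-1, 1} \<and> s' \<in> {-1, 1} \<longrightarrow>
           (\<exists>T. local_isometry_H T \<and>
              (\<forall>x \<Phi>. \<Phi> > 0 \<and> \<Phi>\<^sup>2 \<noteq> h x \<longrightarrow>
                 Psi w1 w2 X0' s' (x, \<Phi>) = T (Psi u1 u2 X0 s (x, \<Phi>)))))))
     \<and>
     complete_integral
       (\<lambda>x \<Phi> Y p q. (\<Phi> / (h x - \<Phi>\<^sup>2) * p)\<^sup>2 + (\<Phi> * q)\<^sup>2 - Y\<^sup>2)
       {(x, \<Phi>). \<Phi> > 0 \<and> \<Phi>\<^sup>2 \<noteq> h x}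
       {(A, B). (A, B) \<noteq> (0, 0)}
       (\<lambda>A B x \<Phi>. \<Phi> / (\<Phi>\<^sup>2 * (A * u1 x + B * u2 x)\<^sup>2
                      + (deriv (\<lambda>t. A * u1 t + B * u2 t) x)\<^sup>2))"
proof -
  have iso: "\<exists>T. local_isometry_H T \<and> (\<forall>x \<Phi>. \<Phi> > 0 \<and> \<Phi>\<^sup>2 \<noteq> h x \<longrightarrow>
      Psi (\<lambda>x. a * u1 x + b * u2 x) (\<lambda>x. c * u1 x + d * u2 x) X0' s' (x, \<Phi>) = T (Psi u1 u2 X0 s (x, \<Phi>)))"
    if "a * d - b * c \<noteq> 0" "s \<in> {-1, 1}" "s' \<in> {-1, 1}" for a b c d X0 s X0' s' :: real
    using Psi_lin_comb_local_isometry[OF hcont sol1 sol2 indep that] by blast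
  show ?thesis
    unfolding Let_def
    by (intro conjI allI impI is_solution_lin_comb[OF sol1 sol2] lin_indep2_lin_comb[OF indep]
        complete_integral_Y[OF hcont sol1 sol2 indep]) (simp_all add: iso)
qed

end
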